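(* Fix integers $N\ge 2$ and $K\ge 1$. For any Boolean tensor $\mathcal{B}\in\{0,1\}^{N\times N\times K}$ with frontal slices $\mathbf{B}_1,\dots,\mathbf{B}_K$, and any $r\in\mathbb{N}^+$ with \[ r\ge\min\Big\{KN,\;2\sum_{k=1}^K\mathrm{rrank}(\mathbf{B}_k)\Big\},\] the set $\pi(\mathcal{M}^{\text{ComplEx}}_r)$ contains a ranking tensor consistent with $\mathcal{B}$.
   Context: A score-based model assigns a score $s_k(i,j)\in\mathbb{R}$ to each triple, $i,j\in\{1,\dots,N\}$, $k\in\{1,\dots,K\}$; its scoring tensor has frontal slices $\mathbf{S}_k$ with $[\mathbf{S}_k]_{ij}=s_k(i,j)$. For a real $N\times N$ matrix $\mathbf{S}$, $\pi(\mathbf{S})$ is the matrix of dense ranks: $\pi_{ij}(\mathbf{S})=1+$ (number of distinct values among entries of $\mathbf{S}$ strictly larger than $s_{ij}$). For tensors, $\pi$ acts slicewise; for a set $X$, $\pi(X)=\{\pi(x):x\in X\}$. ComplEx of size $r$: parameters $\mathbf{A}\in\mathbb{C}^{N\times r}$ (rows $\mathbf{a}_i$), $\mathbf{R}\in\mathbb{C}^{K\times r}$ (rows $\mathbf{r}_k$), score $\mathrm{Re}(\mathbf{a}_i^T\mathrm{diag}(\mathbf{r}_k)\overline{\mathbf{a}_j})$; $\mathcal{M}^{\text{ComplEx}}_r$ is the set of scoring tensors of such models. A ranking tensor $\mathcal{P}$ is consistent with $\mathcal{B}$ if for every $k$ and all $i,j,i',j'$: $b_{ijk}=1$ and $b_{i'j'k}=0$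 imply $p_{ijk}<p_{i'j'k}$. Rounding rank: $\mathrm{round}$ maps each entry $x$ of a real matrix to $1$ if $x\ge 1/2$ and to $0$ otherwise; for $\mathbf{B}\in\{0,1\}^{m\times n}$, $\mathrm{rrank}(\mathbf{B})=\min\{\mathrm{rank}(\mathbf{A}):\mathbf{A}\in\mathbb{R}^{m\times n},\ \mathrm{round}(\mathbf{A})=\mathbf{B}\}$. *)

theory Defs
  imports "HOL-Analysis.Analysis"
begin

text \<open>Entities are indexed by a finite type 'n (N = CARD('n)), relations by a
finite type 'k (K = CARD('k)).\<close>

definition complex_score ::
  "nat \<Rightarrow> ('n \<Rightarrow> nat \<Rightarrow> complex) \<Rightarrow> ('k \<Rightarrow> nat \<Rightarrow> complex) \<Rightarrow> 'n \<Rightarrow> 'n \<Rightarrow> 'k \<Rightarrow> real"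
  where "complex_score r A R i j k = Re (\<Sum>l<r. A i l * R k l * cnj (A j l))"

definition ComplEx_models :: "nat \<Rightarrow> ('n \<Rightarrow> 'n \<Rightarrow> 'k \<Rightarrow> real) set"
  where "ComplEx_models r = {S. \<exists>A R. S = complex_score r A R}"

definition dense_rank :: "('n::finite \<Rightarrow> 'n \<Rightarrow> 'k \<Rightarrow> real) \<Rightarrow> 'n \<Rightarrow> 'n \<Rightarrow> 'k \<Rightarrow> nat"
  where "dense_rank S i j k =
     1 + card {v. (\<exists>i' j'. S i' j' k = v) \<and> v > S i j k}"

definition consistent :: "('n \<Rightarrow> 'n \<Rightarrow> 'k \<Rightarrow> nat) \<Rightarrow> ('n \<Rightarrow> 'n \<Rightarrow> 'k \<Rightarrow> bool) \<Rightarrow> bool"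
  where "consistent P B \<longleftrightarrow>
     (\<forall>k i j i' j'. B i j k \<and> \<not> B i' j' k \<longrightarrow> P i j k < P i' j' k)"

definition rrank :: "('m::finite \<Rightarrow> 'n::finite \<Rightarrow> bool) \<Rightarrow> nat"
  where "rrank B = (LEAST q. \<exists>A :: real^'n^'m.
            (\<forall>i j. (A $ i $ j \<ge> 1/2) = B i j) \<and> rank A = q)"

end

theory Submission
  imports Defs
begin

text \<open>Dense ranks are strictly antitone in the score, so it suffices to build, slice by slice,
a ComplEx score that separates the true entries of \<open>\<B>\<^sub>k\<close> from the false ones by a threshold.
Slices placed on disjoint blocks of coordinates do not interact, so the budget is the sum of the
per-slice costs. A slice costs at most \<open>N\<close> coordinates, by perturbing the identity so as to
realise the sign pattern of \<open>\<B>\<^sub>k\<close>, and at most \<open>2 rrank \<B>\<^sub>k\<close> coordinates, since a real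
matrix that rounds to \<open>\<B>\<^sub>k\<close> is a sum of \<open>rrank \<B>\<^sub>k\<close> outer products and each real outer
product is the ComplEx score of two complex coordinates.\<close>

lemma dense_rank_strict_antimono:
  fixes S :: "'n::finite \<Rightarrow> 'n \<Rightarrow> 'k \<Rightarrow> real"
  assumes "S i' j' k < S i j k"
  shows "dense_rank S i j k < dense_rank S i' j' k"
proof -
  let ?above = "\<lambda>t. {v. (\<exists>a b. S a b k = v) \<and> v > t}"
  have "finite (?above (S i' j' k))"
    by (rule finite_subset[of _ "(\<lambda>(a,b). S a b k) ` UNIV"]) auto
  moreover have "?above (S i j k) \<subset> ?above (S i' j' k)"
    using assms by auto
  ultimately have "card (?above (S i j k)) < card (?above (S i' j' k))"
    by (rule psubset_card_mono)
  then show ?thesis unfolding dense_rank_def by simp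
qed

lemma consistent_dense_rank_threshold:
  fixes S :: "'n::finite \<Rightarrow> 'n \<Rightarrow> 'k \<Rightarrow> real"
  assumes "\<And>i j k. B i j k \<Longrightarrow> S i j k \<ge> \<theta> k"
    and "\<And>i j k. \<not> B i j k \<Longrightarrow> S i j k < \<theta> k"
  shows "consistent (dense_rank S) B"
  unfolding consistent_def
proof (intro allI impI)
  fix k i j i' j' assume "B i j k \<and> \<not> B i' j' k"
  then have "S i' j' k < S i j k" using assms by (meson less_le_trans)
  then show "dense_rank S i j k < dense_rank S i' j' k" by (rule dense_rank_strict_antimono)
qed

lemma ComplEx_models_finite_index:
  fixes I :: "'c set" and x :: "'n \<Rightarrow> 'c \<Rightarrow> complex" and \<rho> :: "'k \<Rightarrow> 'c \<Rightarrow> complex"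
  assumes "finite I" and "card I \<le> r"
  shows "(\<lambda>i j k. Re (\<Sum>c\<in>I. x i c * \<rho> k c * cnj (x j c))) \<in> ComplEx_models r"
proof -
  obtain h where h: "h ` I \<subseteq> {..<r}" "inj_on h I"
    using card_le_inj[OF assms(1), of "{..<r}"] assms(2) by auto
  define A where "A i l = (if l \<in> h ` I then x i (the_inv_into I h l) else 0)" for i l
  define R where "R k l = (if l \<in> h ` I then \<rho> k (the_inv_into I h l) else 0)" for k l
  have "complex_score r A R i j k = Re (\<Sum>c\<in>I. x i c * \<rho> k c * cnj (x j c))" for i j k
  proof -
    have "(\<Sum>l<r. A i l * R k l * cnj (A j l)) = (\<Sum>l\<in>h ` I. A i l * R k l * cnj (A j l))"
      by (rule sum.mono_neutral_right) (use h in \<open>auto simp: A_def R_def\<close>)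
    also have "\<dots> = (\<Sum>c\<in>I. A i (h c) * R k (h c) * cnj (A j (h c)))"
      by (rule sum.reindex[OF h(2), unfolded comp_def])
    also have "\<dots> = (\<Sum>c\<in>I. x i c * \<rho> k c * cnj (x j c))"
      by (rule sum.cong) (use h in \<open>auto simp: A_def R_def the_inv_into_f_f\<close>)
    finally show ?thesis unfolding complex_score_def by simp
  qed
  then have "complex_score r A R = (\<lambda>i j k. Re (\<Sum>c\<in>I. x i c * \<rho> k c * cnj (x j c)))"
    by (intro ext)
  then show ?thesis unfolding ComplEx_models_def by (intro CollectI exI) (rule sym)
qed

lemma ComplEx_models_slicewise:
  fixes J :: "'k::finite \<Rightarrow> 'c set" and x :: "'k \<Rightarrow> 'n \<Rightarrow> 'c \<Rightarrow> complex"
    and \<rho> :: "'k \<Rightarrow> 'c \<Rightarrow> complex" and S :: "'n \<Rightarrow> 'n \<Rightarrow> 'k \<Rightarrow> real"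
  assumes fin: "\<And>k. finite (J k)" and card: "(\<Sum>k\<in>UNIV. card (J k)) \<le> r"
    and S: "\<And>i j k. S i j k = Re (\<Sum>c\<in>J k. x k i c * \<rho> k c * cnj (x k j c))"
  shows "S \<in> ComplEx_models r"
proof -
  define I where "I = (SIGMA k:UNIV. J k)"
  define x' where "x' i c = x (fst c) i (snd c)" for i c
  define \<rho>' where "\<rho>' k c = (if fst c = k then \<rho> k (snd c) else 0)" for k c
  have "S i j k = Re (\<Sum>c\<in>I. x' i c * \<rho>' k c * cnj (x' j c))" for i j k
  proof -
    have "(\<Sum>c\<in>I. x' i c * \<rho>' k c * cnj (x' j c))
        = (\<Sum>k'\<in>UNIV. \<Sum>c\<in>J k'. x' i (k',c) * \<rho>' k (k',c) * cnj (x' j (k',c)))"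
      unfolding I_def using fin by (simp add: sum.Sigma)
    also have "\<dots> = (\<Sum>k'\<in>UNIV. if k' = k then \<Sum>c\<in>J k. x k i c * \<rho> k c * cnj (x k j c) else 0)"
      by (rule sum.cong) (auto simp: x'_def \<rho>'_def)
    also have "\<dots> = (\<Sum>c\<in>J k. x k i c * \<rho> k c * cnj (x k j c))"
      by simp
    finally show ?thesis by (simp add: S)
  qed
  then have "S = (\<lambda>i j k. Re (\<Sum>c\<in>I. x' i c * \<rho>' k c * cnj (x' j c)))"
    by (intro ext)
  moreover have "card I \<le> r"
    using card fin by (simp add: I_def card_SigmaI)
  ultimately show ?thesis
    using ComplEx_models_finite_index[of I r x' \<rho>'] fin by (simp add: I_def)
qed

text \<open>A \<open>\<plusminus>1\<close> sign pattern \<open>\<sigma>\<close> is realised up to sign with one complex coordinate per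
entity: \<open>x\<^sub>i = e\<^sub>i + \<epsilon> z\<^sub>i\<close> and \<open>\<rho>\<^sub>l = \<sigma>\<^sub>l\<^sub>l + \<i>\<close>. The zeroth-order score is
\<open>\<sigma>\<^sub>i\<^sub>i\<close> on the diagonal, the first-order term is chosen to be \<open>\<sigma>\<^sub>i\<^sub>j\<close> off the
diagonal, and \<open>\<epsilon> = 1/(4N)\<close> makes the second-order term too small to flip a sign.\<close>

definition sign_relation :: "('n \<Rightarrow> 'n \<Rightarrow> real) \<Rightarrow> 'n \<Rightarrow> complex"
  where "sign_relation \<sigma> l = Complex (\<sigma> l l) 1"

definition sign_correction :: "('n \<Rightarrow> 'n \<Rightarrow> real) \<Rightarrow> 'n \<Rightarrow> 'n \<Rightarrow> complex"
  where "sign_correction \<sigma> i l = (if i = l then 0 else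
     Complex ((\<sigma> i l + \<sigma> l i) * \<sigma> l l / 4) ((\<sigma> l i - \<sigma> i l) / 4))"

definition sign_entity :: "real \<Rightarrow> ('n \<Rightarrow> 'n \<Rightarrow> real) \<Rightarrow> 'n \<Rightarrow> 'n \<Rightarrow> complex"
  where "sign_entity \<epsilon> \<sigma> i l = (if i = l then 1 else 0) + of_real \<epsilon> * sign_correction \<sigma> i l"

lemma sign_score_expansion:
  fixes \<sigma> :: "'n::finite \<Rightarrow> 'n \<Rightarrow> real"
  defines "\<rho> \<equiv> sign_relation \<sigma>" and "z \<equiv> sign_correction \<sigma>"
  shows "(\<Sum>l\<in>UNIV. sign_entity \<epsilon> \<sigma> i l * \<rho> l * cnj (sign_entity \<epsilon> \<sigma> j l)) =
     (if i = j then \<rho> i else 0) + of_real \<epsilon> * (\<rho> i * cnj (z j i) + z i j * \<rho> j)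
     + of_real (\<epsilon>\<^sup>2) * (\<Sum>l\<in>UNIV. z i l * \<rho> l * cnj (z j l))"
proof -
  have summand: "sign_entity \<epsilon> \<sigma> i l * \<rho> l * cnj (sign_entity \<epsilon> \<sigma> j l) =
     (if i = l \<and> j = l then \<rho> l else 0)
     + of_real \<epsilon> * ((if i = l then \<rho> l * cnj (z j l) else 0) + (if j = l then z i l * \<rho> l else 0))
     + of_real (\<epsilon>\<^sup>2) * (z i l * \<rho> l * cnj (z j l))" for l
    by (simp add: sign_entity_def z_def algebra_simps power2_eq_square)
  show ?thesis
    unfolding summand sum.distrib sum_distrib_left[symmetric]
    by (simp add: sum_distrib_left[symmetric] if_distrib sum.neutral)
qed

lemma Re_sign_first_order:
  assumes "\<And>a b. \<sigma> a b * \<sigma> a b = 1"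
  shows "Re (sign_relation \<sigma> i * cnj (sign_correction \<sigma> j i)
           + sign_correction \<sigma> i j * sign_relation \<sigma> j) = (if i = j then 0 else \<sigma> i j)"
proof (cases "i = j")
  case False
  then have "Re (sign_relation \<sigma> i * cnj (sign_correction \<sigma> j i)
               + sign_correction \<sigma> i j * sign_relation \<sigma> j)
     = (\<sigma> j i + \<sigma> i j) * (\<sigma> i i * \<sigma> i i) / 4 + (\<sigma> i j - \<sigma> j i) / 4
       + ((\<sigma> i j + \<sigma> j i) * (\<sigma> j j * \<sigma> j j) / 4 - (\<sigma> j i - \<sigma> i j) / 4)"
    by (simp add: sign_correction_def sign_relation_def algebra_simps)
  also have "\<dots> = \<sigma> i j" by (simp add: assms field_simps)
  finally show ?thesis using False by simp
qed (simp add: sign_correction_def)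

lemma norm_sign_second_order_le:
  fixes \<sigma> :: "'n::finite \<Rightarrow> 'n \<Rightarrow> real"
  assumes \<sigma>: "\<And>a b. \<bar>\<sigma> a b\<bar> = 1"
  shows "norm (\<Sum>l\<in>UNIV. sign_correction \<sigma> i l * sign_relation \<sigma> l * cnj (sign_correction \<sigma> j l))
           \<le> 2 * real CARD('n)"
proof -
  have z: "norm (sign_correction \<sigma> a b) \<le> 1" for a b
  proof -
    have "norm (sign_correction \<sigma> a b)
            \<le> \<bar>Re (sign_correction \<sigma> a b)\<bar> + \<bar>Im (sign_correction \<sigma> a b)\<bar>"
      by (rule cmod_le)
    also have "\<dots> \<le> 1"
      using \<sigma>[of a b] \<sigma>[of b a] \<sigma>[of b b]
      by (auto simp: sign_correction_def abs_if split: if_splits)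
    finally show ?thesis .
  qed
  have \<rho>: "norm (sign_relation \<sigma> a) \<le> 2" for a
    using cmod_le[of "sign_relation \<sigma> a"] \<sigma>[of a a] by (simp add: sign_relation_def)
  have "norm (\<Sum>l\<in>UNIV. sign_correction \<sigma> i l * sign_relation \<sigma> l * cnj (sign_correction \<sigma> j l))
      \<le> (\<Sum>l\<in>(UNIV::'n set). 1 * 2 * 1)"
    by (rule order_trans[OF norm_sum sum_mono])
       (simp only: norm_mult complex_mod_cnj, intro mult_mono z \<rho>, auto)
  then show ?thesis by simp
qed

lemma sign_score_sign:
  fixes \<sigma> :: "'n::finite \<Rightarrow> 'n \<Rightarrow> real"
  assumes \<sigma>: "\<And>a b. \<sigma> a b = 1 \<or> \<sigma> a b = -1"
  defines "\<epsilon> \<equiv> 1 / (4 * real CARD('n))"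
  shows "\<sigma> i j * Re (\<Sum>l\<in>UNIV. sign_entity \<epsilon> \<sigma> i l * sign_relation \<sigma> l
                                  * cnj (sign_entity \<epsilon> \<sigma> j l)) > 0"
proof -
  have sq: "\<sigma> a b * \<sigma> a b = 1" and ab: "\<bar>\<sigma> a b\<bar> = 1" for a b
    using \<sigma>[of a b] by auto
  have \<epsilon>: "0 < \<epsilon>" "\<epsilon> \<le> 1/4" "\<epsilon> * (2 * real CARD('n)) = 1/2"
    by (auto simp: \<epsilon>_def field_simps)
  define q where "q = Re (\<Sum>l\<in>UNIV. sign_correction \<sigma> i l * sign_relation \<sigma> l
                                  * cnj (sign_correction \<sigma> j l))"
  have "\<bar>q\<bar> \<le> 2 * real CARD('n)"
    unfolding q_def using abs_Re_le_cmod norm_sign_second_order_le[OF ab] by (rule order_trans)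
  then have "\<epsilon> * (\<epsilon> * \<bar>q\<bar>) \<le> \<epsilon> * (\<epsilon> * (2 * real CARD('n)))"
    using \<epsilon> by (intro mult_left_mono) auto
  then have small: "\<bar>\<sigma> i j * (\<epsilon>\<^sup>2 * q)\<bar> \<le> \<epsilon> / 2"
    using \<epsilon> by (simp add: abs_mult ab power2_eq_square mult.assoc)
  have "Re (\<Sum>l\<in>UNIV. sign_entity \<epsilon> \<sigma> i l * sign_relation \<sigma> l * cnj (sign_entity \<epsilon> \<sigma> j l))
      = (if i = j then \<sigma> i i else 0) + \<epsilon> * (if i = j then 0 else \<sigma> i j) + \<epsilon>\<^sup>2 * q"
  proof -
    have Re_expansion: "Re (a + of_real \<epsilon> * w + of_real (\<epsilon>\<^sup>2) * p)
        = Re a + \<epsilon> * Re w + \<epsilon>\<^sup>2 * Re p" for a w p :: complex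
      by simp
    show ?thesis
      unfolding sign_score_expansion Re_expansion q_def Re_sign_first_order[OF sq]
      by (simp add: sign_relation_def)
  qed
  then show ?thesis
    using small \<epsilon> sq[of i j] by (cases "i = j") (auto simp: algebra_simps abs_le_iff)
qed

lemma ComplEx_consistent_ranking_if_card_le:
  fixes B :: "'n::finite \<Rightarrow> 'n \<Rightarrow> 'k::finite \<Rightarrow> bool"
  assumes "CARD('k) * CARD('n) \<le> r"
  shows "\<exists>P \<in> dense_rank ` (ComplEx_models r :: ('n \<Rightarrow> 'n \<Rightarrow> 'k \<Rightarrow> real) set). consistent P B"
proof -
  define \<sigma> where "\<sigma> k a b = (if B a b k then 1 else -1 :: real)" for k a b
  define \<epsilon> where "\<epsilon> = 1 / (4 * real CARD('n))"
  define S where "S i j k = Re (\<Sum>l\<in>UNIV. sign_entity \<epsilon> (\<sigma> k) i l * sign_relation (\<sigma> k) l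
                                          * cnj (sign_entity \<epsilon> (\<sigma> k) j l))" for i j k
  have "S \<in> ComplEx_models r"
    by (rule ComplEx_models_slicewise[where J = "\<lambda>_. UNIV"]) (use assms in \<open>simp_all add: S_def\<close>)
  moreover have sign: "\<sigma> k i j * S i j k > 0" for i j k
    unfolding S_def \<epsilon>_def by (rule sign_score_sign) (simp add: \<sigma>_def)
  have "consistent (dense_rank S) B"
  proof (rule consistent_dense_rank_threshold[where \<theta> = "\<lambda>_. 0"])
    show "S i j k \<ge> 0" if "B i j k" for i j k
      using sign[of k i j] that by (simp add: \<sigma>_def)
    show "S i j k < 0" if "\<not> B i j k" for i j k
      using sign[of k i j] that by (simp add: \<sigma>_def)
  qed
  ultimately show ?thesis by blast
qed

text \<open>With \<open>a = (u + v)/2\<close> and \<open>b = (u - v)/2\<close>, the coordinates \<open>a + \<i> b\<close> (weight \<open>1 - \<i>\<close>)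
and \<open>b\<close> (weight \<open>-2\<close>) contribute \<open>(a\<^sub>i + b\<^sub>i)(a\<^sub>j - b\<^sub>j) = u\<^sub>i v\<^sub>j\<close> to the real score.\<close>

definition outer_product_entity ::
    "('t \<Rightarrow> 'n \<Rightarrow> real) \<Rightarrow> ('t \<Rightarrow> 'n \<Rightarrow> real) \<Rightarrow> 'n \<Rightarrow> 't \<times> bool \<Rightarrow> complex"
  where "outer_product_entity u v i c =
    (if snd c then Complex ((u (fst c) i + v (fst c) i) / 2) ((u (fst c) i - v (fst c) i) / 2)
     else complex_of_real ((u (fst c) i - v (fst c) i) / 2))"

definition outer_product_relation :: "'t \<times> bool \<Rightarrow> complex"
  where "outer_product_relation c = (if snd c then Complex 1 (-1) else -2)"

lemma Re_outer_product_score: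
  assumes "finite T"
  shows "Re (\<Sum>c\<in>T \<times> UNIV. outer_product_entity u v i c * outer_product_relation c
                              * cnj (outer_product_entity u v j c))
         = (\<Sum>t\<in>T. u t i * v t j)"
proof -
  have "(\<Sum>c\<in>T \<times> UNIV. outer_product_entity u v i c * outer_product_relation c
                       * cnj (outer_product_entity u v j c))
      = (\<Sum>t\<in>T. \<Sum>b\<in>UNIV. outer_product_entity u v i (t,b) * outer_product_relation (t,b)
                           * cnj (outer_product_entity u v j (t,b)))"
    by (simp add: sum.cartesian_product case_prod_unfold)
  also have "Re \<dots> = (\<Sum>t\<in>T. u t i * v t j)"
    unfolding Re_sum
    by (rule sum.cong) (simp_all add: UNIV_bool outer_product_entity_def
                          outer_product_relation_def field_simps)
  finally show ?thesis .
qed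

lemma rank_factorization:
  fixes A :: "real^'n::finite^'m::finite"
  obtains T :: "(real^'n) set" and c where "finite T" "card T = rank A"
    "\<And>i j. A $ i $ j = (\<Sum>b\<in>T. c i b * b $ j)"
proof -
  obtain T where T: "independent T" "rows A \<subseteq> span T" "card T = dim (rows A)"
    by (rule basis_exists)
  have fin: "finite T" using T(1) independent_bound by blast
  have "\<forall>i. \<exists>c. row i A = (\<Sum>b\<in>T. c b *\<^sub>R b)"
    using T(2) unfolding span_finite[OF fin] rows_def by blast
  then obtain c where c: "\<And>i. row i A = (\<Sum>b\<in>T. c i b *\<^sub>R b)"
    using choice[of "\<lambda>i c. row i A = (\<Sum>b\<in>T. c b *\<^sub>R b)"] by blast
  have entries: "A $ i $ j = (\<Sum>b\<in>T. c i b * b $ j)" for i j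
  proof -
    have "A $ i $ j = row i A $ j" by (simp add: row_def)
    also have "\<dots> = (\<Sum>b\<in>T. c i b * b $ j)" unfolding c by (simp add: sum_component)
    finally show ?thesis .
  qed
  show thesis
    by (rule that[OF fin _ entries]) (simp add: T(3) row_rank_def)
qed
lemma rrank_attained:
  fixes B :: "'m::finite \<Rightarrow> 'n::finite \<Rightarrow> bool"
  obtains A :: "real^'n^'m" where "\<And>i j. (A $ i $ j \<ge> 1/2) \<longleftrightarrow> B i j" "rank A = rrank B"
proof -
  let ?realises = "\<lambda>q. \<exists>A :: real^'n^'m. (\<forall>i j. (A $ i $ j \<ge> 1/2) = B i j) \<and> rank A = q"
  have "?realises (rank ((\<chi> i j. if B i j then 1 else 0) :: real^'n^'m))"
    by (rule exI[of _ "\<chi> i j. if B i j then 1 else 0"]) auto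
  then have "?realises (LEAST q. ?realises q)" by (rule LeastI)
  then show thesis using that unfolding rrank_def by blast
qed

lemma ComplEx_consistent_ranking_if_rrank_le:
  fixes B :: "'n::finite \<Rightarrow> 'n \<Rightarrow> 'k::finite \<Rightarrow> bool"
  assumes "2 * (\<Sum>k\<in>UNIV. rrank (\<lambda>i j. B i j k)) \<le> r"
  shows "\<exists>P \<in> dense_rank ` (ComplEx_models r :: ('n \<Rightarrow> 'n \<Rightarrow> 'k \<Rightarrow> real) set). consistent P B"
proof -
  have "\<forall>k. \<exists>A :: real^'n^'n. (\<forall>i j. (A $ i $ j \<ge> 1/2) = B i j k) \<and> rank A = rrank (\<lambda>i j. B i j k)"
    by (metis rrank_attained)
  then obtain A :: "'k \<Rightarrow> real^'n^'n"
    where A: "\<And>k i j. (A k $ i $ j \<ge> 1/2) = B i j k" "\<And>k. rank (A k) = rrank (\<lambda>i j. B i j k)"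
    by metis
  have "\<forall>k. \<exists>T c. finite T \<and> card T = rank (A k) \<and> (\<forall>i j. A k $ i $ j = (\<Sum>b\<in>T. c i b * b $ j))"
    by (metis rank_factorization)
  then obtain T c where T: "\<And>k. finite (T k)" "\<And>k. card (T k) = rank (A k)"
    and c: "\<And>k i j. A k $ i $ j = (\<Sum>b\<in>T k. c k i b * b $ j)"
    by metis
  define S where "S i j k = A k $ i $ j" for i j k
  have "S \<in> ComplEx_models r"
  proof (rule ComplEx_models_slicewise[where J = "\<lambda>k. T k \<times> UNIV"])
    show "(\<Sum>k\<in>UNIV. card (T k \<times> (UNIV :: bool set))) \<le> r"
      using assms by (simp add: card_cartesian_product T A(2) sum_distrib_left mult.commute)
    show "S i j k = Re (\<Sum>p\<in>T k \<times> UNIV.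
             outer_product_entity (\<lambda>b i. c k i b) (\<lambda>b j. b $ j) i p * outer_product_relation p
             * cnj (outer_product_entity (\<lambda>b i. c k i b) (\<lambda>b j. b $ j) j p))" for i j k
      unfolding Re_outer_product_score[OF T(1)] S_def c ..
  qed (use T(1) in simp)
  moreover have "consistent (dense_rank S) B"
    by (rule consistent_dense_rank_threshold[where \<theta> = "\<lambda>_. 1/2"]) (auto simp: S_def A(1)[symmetric])
  ultimately show ?thesis by blast
qed

theorem theorem12:
  fixes B :: "'n::finite \<Rightarrow> 'n \<Rightarrow> 'k::finite \<Rightarrow> bool"
    and r :: nat
  assumes "CARD('n) \<ge> 2"
    and "r \<ge> 1"
    and "r \<ge> min (CARD('k) * CARD('n)) (2 * (\<Sum>k\<in>UNIV. rrank (\<lambda>i j. B i j k)))"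
  shows "\<exists>P \<in> dense_rank ` (ComplEx_models r :: ('n \<Rightarrow> 'n \<Rightarrow> 'k \<Rightarrow> real) set).
           consistent P B"
  using assms(3) ComplEx_consistent_ranking_if_card_le ComplEx_consistent_ranking_if_rrank_le
  by (cases "CARD('k) * CARD('n) \<le> 2 * (\<Sum>k\<in>UNIV. rrank (\<lambda>i j. B i j k))") auto

end
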